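(* Let $\mathcal{M}=(E,\mathcal{I})$ be a loopless matroid with $n=|E|$ elements and rank $r\geq 1$ that is uniformly dense. Let $1\leq j\leq n$ and let $(x_1,\dots,x_j)$ be a sequence of $j$ distinct elements of $E$ chosen uniformly at random among all such sequences. Then the probability that $x_j$ is selected by the greedy procedure run on the sequence $(x_1,\dots,x_j)$ is at least $1-(j-1)/r$.
   Context: For a loopless matroid $\mathcal{M}=(E,\mathcal{I})$ with rank function $r(\cdot)$, its density is $\gamma(\mathcal{M})=\max_{\emptyset\neq X\subseteq E}|X|/r(X)$. The matroid is uniformly dense if $|X|/r(X)\leq |E|/r(E)$ for every non-empty $X\subseteq E$. The greedy procedure on a sequence of elements processes them in order and selects an element if and only if it can be added to the previously selected elements while keeping the selected set independent. *)

theory Defs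
  imports Complex_Main
begin

definition matroid :: "'a set \<Rightarrow> ('a set \<Rightarrow> bool) \<Rightarrow> bool" where
  "matroid E indep \<longleftrightarrow>
     finite E \<and>
     (\<forall>X. indep X \<longrightarrow> X \<subseteq> E) \<and>
     indep {} \<and>
     (\<forall>X Y. indep X \<and> Y \<subseteq> X \<longrightarrow> indep Y) \<and>
     (\<forall>X Y. indep X \<and> indep Y \<and> card X < card Y \<longrightarrow>
        (\<exists>y \<in> Y - X. indep (insert y X)))"

definition mrank :: "('a set \<Rightarrow> bool) \<Rightarrow> 'a set \<Rightarrow> nat" where
  "mrank indep X = Max {card Y | Y. Y \<subseteq> X \<and> indep Y}"

definition loopless :: "'a set \<Rightarrow> ('a set \<Rightarrow> bool) \<Rightarrow> bool" where
  "loopless E indep \<longleftrightarrow> (\<forall>e \<in> E. indep {e})"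

definition uniformly_dense :: "'a set \<Rightarrow> ('a set \<Rightarrow> bool) \<Rightarrow> bool" where
  "uniformly_dense E indep \<longleftrightarrow>
     (\<forall>X. X \<subseteq> E \<and> X \<noteq> {} \<longrightarrow>
        real (card X) / real (mrank indep X) \<le> real (card E) / real (mrank indep E))"

definition greedy :: "('a set \<Rightarrow> bool) \<Rightarrow> 'a list \<Rightarrow> 'a set" where
  "greedy indep xs =
     foldl (\<lambda>S x. if indep (insert x S) then insert x S else S) {} xs"

definition last_selected :: "('a set \<Rightarrow> bool) \<Rightarrow> 'a list \<Rightarrow> bool" where
  "last_selected indep xs \<longleftrightarrow> indep (insert (last xs) (greedy indep (butlast xs)))"

definition dseqs :: "'a set \<Rightarrow> nat \<Rightarrow> 'a list set" where
  "dseqs E j = {xs. set xs \<subseteq> E \<and> distinct xs \<and> length xs = j}"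

end

theory Submission
  imports Defs
begin

text \<open>Fix a prefix of \<open>k = j - 1\<close> distinct elements and let \<open>G\<close> be the independent set the
  greedy procedure selects from it. Its closure \<open>D\<close>, consisting of \<open>G\<close> and all elements that
  cannot be added to \<open>G\<close>, has rank \<open>|G| \<le> k\<close>, so uniform density gives \<open>|D| \<le> n k / r\<close>.
  The closure contains the whole prefix, hence at most \<open>n k / r - k \<le> k (n - k) / r\<close> of the
  \<open>n - k\<close> possible last elements are rejected. Every prefix has the same number of extensions,
  so averaging over prefixes gives the bound.\<close>

definition greedy_step :: "('a set \<Rightarrow> bool) \<Rightarrow> 'a set \<Rightarrow> 'a \<Rightarrow> 'a set" where
  "greedy_step indep S x = (if indep (insert x S) then insert x S else S)"

lemma greedy_step_accept: "indep (insert x S) \<Longrightarrow> greedy_step indep S x = insert x S"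
  and greedy_step_reject: "\<not> indep (insert x S) \<Longrightarrow> greedy_step indep S x = S"
  by (simp_all add: greedy_step_def)

lemma greedy_eq_foldl: "greedy indep xs = foldl (greedy_step indep) {} xs"
  by (simp add: greedy_def greedy_step_def[abs_def])

lemma indep_foldl_greedy_step: "indep S \<Longrightarrow> indep (foldl (greedy_step indep) S xs)"
  by (induction xs arbitrary: S) (auto simp: greedy_step_def)

lemma foldl_greedy_step_subset: "foldl (greedy_step indep) S xs \<subseteq> S \<union> set xs"
proof (induction xs arbitrary: S)
  case (Cons a xs)
  have "greedy_step indep S a \<subseteq> insert a S"
    by (auto simp: greedy_step_def)
  with Cons.IH[of "greedy_step indep S a"] show ?case by auto
qed simp

lemma subset_foldl_greedy_step: "S \<subseteq> foldl (greedy_step indep) S xs"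
proof (induction xs arbitrary: S)
  case (Cons a xs)
  have "S \<subseteq> greedy_step indep S a"
    by (auto simp: greedy_step_def)
  with Cons.IH[of "greedy_step indep S a"] show ?case by auto
qed simp

lemma foldl_greedy_step_maximal:
  assumes hereditary: "\<And>X Y. indep X \<Longrightarrow> Y \<subseteq> X \<Longrightarrow> indep Y" and "x \<in> set xs"
  shows "x \<in> foldl (greedy_step indep) S xs \<or> \<not> indep (insert x (foldl (greedy_step indep) S xs))"
  using \<open>x \<in> set xs\<close>
proof (induction xs arbitrary: S)
  case (Cons a xs)
  show ?case
  proof (cases "x \<in> set xs")
    case True
    then show ?thesis using Cons.IH by simp
  next
    case False
    with Cons.prems have "x = a" by simp
    show ?thesis
    proof (cases "indep (insert a S)")
      case True
      then have "a \<in> foldl (greedy_step indep) (insert a S) xs"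
        using subset_foldl_greedy_step[of "insert a S" indep xs] by blast
      with True \<open>x = a\<close> show ?thesis by (simp add: greedy_step_accept)
    next
      case False
      have "insert a S \<subseteq> insert a (foldl (greedy_step indep) S xs)"
        using subset_foldl_greedy_step[of S indep xs] by blast
      with False have "\<not> indep (insert a (foldl (greedy_step indep) S xs))"
        using hereditary by metis
      with False \<open>x = a\<close> show ?thesis by (simp add: greedy_step_reject)
    qed
  qed
qed simp

lemma indep_greedy: "indep {} \<Longrightarrow> indep (greedy indep xs)"
  by (simp add: greedy_eq_foldl indep_foldl_greedy_step)

lemma greedy_subset: "greedy indep xs \<subseteq> set xs"
  using foldl_greedy_step_subset[of indep "{}" xs] by (simp add: greedy_eq_foldl)

lemma greedy_maximal:
  "(\<And>X Y. indep X \<Longrightarrow> Y \<subseteq> X \<Longrightarrow> indep Y) \<Longrightarrow> x \<in> set xs \<Longrightarrow>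
     x \<in> greedy indep xs \<or> \<not> indep (insert x (greedy indep xs))"
  unfolding greedy_eq_foldl by (rule foldl_greedy_step_maximal)

lemma finite_indep_cards:
  assumes "finite X"
  shows "finite {card Y | Y. Y \<subseteq> X \<and> indep Y}"
proof (rule finite_subset)
  show "{card Y | Y. Y \<subseteq> X \<and> indep Y} \<subseteq> card ` Pow X" by auto
qed (use assms in simp)

lemma mrank_ge_card:
  "finite X \<Longrightarrow> Y \<subseteq> X \<Longrightarrow> indep Y \<Longrightarrow> card Y \<le> mrank indep X"
  unfolding mrank_def by (rule Max_ge[OF finite_indep_cards]) auto

lemma mrank_eq_card_if_maximal:
  assumes "matroid E indep" and "indep G" and "G \<subseteq> D" and "D \<subseteq> E"
    and maximal: "\<And>e. e \<in> D - G \<Longrightarrow> \<not> indep (insert e G)"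
  shows "mrank indep D = card G"
  unfolding mrank_def
proof (rule Max_eqI)
  show "finite {card Y | Y. Y \<subseteq> D \<and> indep Y}"
    using assms(1,4) by (intro finite_indep_cards) (auto simp: matroid_def intro: finite_subset)
next
  fix y assume "y \<in> {card Y | Y. Y \<subseteq> D \<and> indep Y}"
  then obtain Y where Y: "y = card Y" "Y \<subseteq> D" "indep Y" by auto
  show "y \<le> card G"
  proof (rule ccontr)
    assume "\<not> y \<le> card G"
    with Y assms(1,2) obtain e where "e \<in> Y - G" "indep (insert e G)"
      unfolding matroid_def by (metis not_le)
    with Y(2) maximal show False by blast
  qed
qed (use assms(2,3) in auto)

lemma mrank_pos_if_loopless:
  assumes "matroid E indep" and "loopless E indep" and "X \<subseteq> E" and "X \<noteq> {}"
  shows "mrank indep X > 0"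
proof -
  obtain e where "e \<in> X" using assms(4) by blast
  then have "card {e} \<le> mrank indep X"
    using assms(1-3) by (intro mrank_ge_card)
      (auto simp: matroid_def loopless_def intro: finite_subset)
  then show ?thesis by simp
qed

lemma uniformly_dense_card_mult_le:
  assumes "matroid E indep" and "loopless E indep" and "uniformly_dense E indep" and "X \<subseteq> E"
  shows "real (card X) * real (mrank indep E) \<le> real (card E) * real (mrank indep X)"
proof (cases "X = {}")
  case False
  then have "mrank indep X > 0" "mrank indep E > 0"
    using assms(4) mrank_pos_if_loopless[OF assms(1,2)] by blast+
  moreover have "real (card X) / real (mrank indep X) \<le> real (card E) / real (mrank indep E)"
    using assms(3,4) False by (simp add: uniformly_dense_def)
  ultimately show ?thesis by (simp add: field_simps)
qed simp

lemma finite_dseqs: "finite E \<Longrightarrow> finite (dseqs E k)"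
  unfolding dseqs_def
  by (rule finite_subset[OF _ finite_lists_length_eq[of E k]]) auto

lemma dseqs_nonempty:
  assumes "finite E" and "k \<le> card E"
  shows "dseqs E k \<noteq> {}"
proof -
  obtain zs where "set zs = E" "distinct zs"
    using finite_distinct_list[OF assms(1)] by blast
  then have "take k zs \<in> dseqs E k"
    using assms(2) by (auto simp: dseqs_def distinct_card dest: in_set_takeD)
  then show ?thesis by blast
qed

lemma card_dseqs_Suc_filter:
  assumes "finite E"
  shows "card {xs \<in> dseqs E (Suc k). P xs} =
    (\<Sum>ys\<in>dseqs E k. card {e \<in> E - set ys. P (ys @ [e])})"
proof -
  let ?S = "SIGMA ys:dseqs E k. {e \<in> E - set ys. P (ys @ [e])}"
  have "{xs \<in> dseqs E (Suc k). P xs} = (\<lambda>(ys, e). ys @ [e]) ` ?S"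
  proof (intro equalityI subsetI)
    fix xs assume xs: "xs \<in> {xs \<in> dseqs E (Suc k). P xs}"
    then obtain ys e where "xs = ys @ [e]"
      by (cases xs rule: rev_cases) (auto simp: dseqs_def)
    with xs have "(ys, e) \<in> ?S"
      by (auto simp: dseqs_def)
    with \<open>xs = ys @ [e]\<close> show "xs \<in> (\<lambda>(ys, e). ys @ [e]) ` ?S"
      by force
  qed (auto simp: dseqs_def)
  moreover have "inj_on (\<lambda>(ys, e). ys @ [e]) ?S"
    by (auto simp: inj_on_def)
  ultimately show ?thesis
    using assms by (simp add: card_image card_SigmaI finite_dseqs)
qed

lemma card_dseqs_Suc:
  assumes "finite E"
  shows "card (dseqs E (Suc k)) = card (dseqs E k) * (card E - k)"
proof -
  have "card (dseqs E (Suc k)) = (\<Sum>ys\<in>dseqs E k. card (E - set ys))"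
    using card_dseqs_Suc_filter[OF assms, of k "\<lambda>_. True"] by (simp add: set_diff_eq)
  also have "\<dots> = (\<Sum>ys\<in>dseqs E k. card E - k)"
    using assms by (intro sum.cong) (auto simp: dseqs_def card_Diff_subset distinct_card)
  finally show ?thesis by simp
qed

lemma card_rejected_le:
  assumes m: "matroid E indep" and "loopless E indep" and "uniformly_dense E indep"
    and ys: "ys \<in> dseqs E k"
  shows "real (card {e \<in> E - set ys. \<not> indep (insert e (greedy indep ys))} + k)
           * real (mrank indep E) \<le> real (card E) * real k"
proof -
  define G where "G = greedy indep ys"
  define D where "D = {e \<in> E. e \<in> G \<or> \<not> indep (insert e G)}"
  have "finite E" and hereditary: "\<And>X Y. indep X \<Longrightarrow> Y \<subseteq> X \<Longrightarrow> indep Y"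
    and "indep {}" using m by (auto simp: matroid_def)
  have "set ys \<subseteq> E" and "card (set ys) = k"
    using ys by (auto simp: dseqs_def distinct_card)
  have "indep G" and "G \<subseteq> set ys"
    unfolding G_def by (simp_all add: indep_greedy[of indep, OF \<open>indep {}\<close>] greedy_subset)
  have ys_D: "set ys \<subseteq> D"
  proof
    fix x assume "x \<in> set ys"
    with hereditary have "x \<in> G \<or> \<not> indep (insert x G)"
      unfolding G_def by (rule greedy_maximal)
    with \<open>x \<in> set ys\<close> \<open>set ys \<subseteq> E\<close> show "x \<in> D"
      by (auto simp: D_def)
  qed
  have "D \<subseteq> E" by (auto simp: D_def)
  then have "finite D" using \<open>finite E\<close> by (rule finite_subset)
  have "mrank indep D = card G"
    using \<open>G \<subseteq> set ys\<close> ys_D \<open>D \<subseteq> E\<close>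
    by (intro mrank_eq_card_if_maximal[OF m \<open>indep G\<close>]) (auto simp: D_def)
  moreover have "card G \<le> k"
    using \<open>G \<subseteq> set ys\<close> \<open>card (set ys) = k\<close> card_mono by fastforce
  ultimately have "real (card D) * real (mrank indep E) \<le> real (card E) * real k"
    using uniformly_dense_card_mult_le[OF assms(1-3) \<open>D \<subseteq> E\<close>]
    by (smt (verit) mult_left_mono of_nat_0_le_iff of_nat_mono)
  moreover have "card {e \<in> E - set ys. \<not> indep (insert e G)} + k \<le> card D"
  proof -
    have "{e \<in> E - set ys. \<not> indep (insert e G)} \<union> set ys \<subseteq> D"
      using ys_D by (auto simp: D_def)
    then have "card ({e \<in> E - set ys. \<not> indep (insert e G)} \<union> set ys) \<le> card D"
      using \<open>finite D\<close> by (rule card_mono[rotated])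
    moreover have "card ({e \<in> E - set ys. \<not> indep (insert e G)} \<union> set ys)
        = card {e \<in> E - set ys. \<not> indep (insert e G)} + k"
      using \<open>finite E\<close> \<open>card (set ys) = k\<close> by (subst card_Un_disjoint) auto
    ultimately show ?thesis by simp
  qed
  ultimately show ?thesis
    unfolding G_def
    by (smt (verit) mult_right_mono of_nat_0_le_iff of_nat_mono)
qed

lemma card_accepted_ge:
  assumes "matroid E indep" and "loopless E indep" and "uniformly_dense E indep"
    and "mrank indep E \<ge> 1" and ys: "ys \<in> dseqs E k"
  shows "real (card {e \<in> E - set ys. indep (insert e (greedy indep ys))})
           \<ge> (real (card E) - real k) * (1 - real k / real (mrank indep E))"
proof -
  let ?r = "real (mrank indep E)" and ?n = "real (card E)"
  let ?accepted = "{e \<in> E - set ys. indep (insert e (greedy indep ys))}"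
  let ?rejected = "{e \<in> E - set ys. \<not> indep (insert e (greedy indep ys))}"
  have "finite E" using assms(1) by (simp add: matroid_def)
  have "set ys \<subseteq> E" "card (set ys) = k"
    using ys by (auto simp: dseqs_def distinct_card)
  then have "k \<le> card E" using \<open>finite E\<close> card_mono by metis
  have "card ?accepted + card ?rejected = card (E - set ys)"
    using \<open>finite E\<close> by (subst card_Un_disjoint[symmetric]) (auto intro: arg_cong[where f = card])
  then have split: "real (card ?accepted) + real (card ?rejected) = ?n - real k"
    using \<open>set ys \<subseteq> E\<close> \<open>card (set ys) = k\<close> \<open>finite E\<close> \<open>k \<le> card E\<close>
    by (simp add: card_Diff_subset of_nat_diff flip: of_nat_add)
  have "real (card ?rejected) \<le> real k * (?n - ?r) / ?r"
    using card_rejected_le[OF assms(1-3) ys] assms(4) by (simp add: field_simps)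
  show ?thesis
  proof (cases "real k \<le> ?r")
    case True
    then have "real k * (?n - ?r) / ?r \<le> real k * (?n - real k) / ?r"
      by (intro divide_right_mono mult_left_mono) auto
    with split \<open>real (card ?rejected) \<le> _\<close> show ?thesis
      by (simp add: algebra_simps diff_divide_distrib)
  next
    case False
    then have "1 - real k / ?r < 0" using assms(4) by (simp add: field_simps)
    with \<open>k \<le> card E\<close> have "(?n - real k) * (1 - real k / ?r) \<le> 0"
      by (simp add: mult_nonneg_nonpos)
    then show ?thesis by (smt (verit) of_nat_0_le_iff)
  qed
qed

theorem lemma1:
  fixes E :: "'a set" and indep :: "'a set \<Rightarrow> bool" and j :: nat
  assumes "matroid E indep"
    and "loopless E indep"
    and "mrank indep E \<ge> 1"
    and "uniformly_dense E indep"
    and "1 \<le> j" and "j \<le> card E"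
  shows "real (card {xs \<in> dseqs E j. last_selected indep xs}) / real (card (dseqs E j))
           \<ge> 1 - (real j - 1) / real (mrank indep E)"
proof -
  obtain k where j: "j = Suc k" using \<open>1 \<le> j\<close> by (cases j) auto
  let ?accepted = "\<lambda>ys. {e \<in> E - set ys. indep (insert e (greedy indep ys))}"
  let ?bound = "(real (card E) - real k) * (1 - real k / real (mrank indep E))"
  have "finite E" using assms(1) by (simp add: matroid_def)
  have "card {xs \<in> dseqs E j. last_selected indep xs} = (\<Sum>ys\<in>dseqs E k. card (?accepted ys))"
    unfolding j by (simp add: card_dseqs_Suc_filter[OF \<open>finite E\<close>] last_selected_def)
  also have "real \<dots> \<ge> real (card (dseqs E k)) * ?bound"
    using sum_mono[of "dseqs E k" "\<lambda>_. ?bound" "\<lambda>ys. real (card (?accepted ys))"]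
      card_accepted_ge[OF assms(1,2,4,3)] by simp
  finally have selected: "real (card {xs \<in> dseqs E j. last_selected indep xs})
      \<ge> real (card (dseqs E j)) * (1 - real k / real (mrank indep E))"
    using \<open>j \<le> card E\<close> by (simp add: j card_dseqs_Suc[OF \<open>finite E\<close>] of_nat_diff)
  have "card (dseqs E j) > 0"
    using \<open>finite E\<close> \<open>j \<le> card E\<close> by (simp add: card_gt_0_iff finite_dseqs dseqs_nonempty)
  with selected show ?thesis
    by (simp add: j le_divide_eq mult.commute)
qed

end
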